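(* Let $p$ be an odd prime and let $G$ be an extraspecial $p$-group. Then the Amit–Ashurst conjecture holds for $G$.
   Context: A finite $p$-group $G$ is special if $G'=\Phi(G)=Z(G)$ and both $Z(G)$ and $G/Z(G)$ are elementary abelian; it is extraspecial if moreover $Z(G)$ is cyclic (of order $p$). For a word $w\in F_k$ (free group on $x_1,\dots,x_k$), $w(G)$ is the image of the word map $G^k\to G$ and $P_{w,G}(g):=|\{(g_1,\dots,g_k)\in G^k: w(g_1,\dots,g_k)=g\}|/|G|^k$. The Amit–Ashurst conjecture holds for $G$ if for every $k\ge1$, every $w\in F_k$ and every $g\in w(G)$, $P_{w,G}(g)\ge|G|^{-1}$. *)

theory Defs
  imports "HOL-Algebra.Algebra"
begin

definition grp_center :: "('a, 'b) monoid_scheme \<Rightarrow> 'a set" where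
  "grp_center G = {z \<in> carrier G. \<forall>x \<in> carrier G. z \<otimes>\<^bsub>G\<^esub> x = x \<otimes>\<^bsub>G\<^esub> z}"

text \<open>Maximal subgroups and the Frattini subgroup (intersection of all maximal
  subgroups; equal to the whole group if there are none).\<close>
definition maximal_subgroup :: "'a set \<Rightarrow> ('a, 'b) monoid_scheme \<Rightarrow> bool" where
  "maximal_subgroup H G \<longleftrightarrow> subgroup H G \<and> H \<noteq> carrier G \<and>
     (\<forall>K. subgroup K G \<and> H \<subseteq> K \<longrightarrow> K = H \<or> K = carrier G)"

definition frattini :: "('a, 'b) monoid_scheme \<Rightarrow> 'a set" where
  "frattini G = carrier G \<inter> \<Inter> {H. maximal_subgroup H G}"

definition p_group :: "nat \<Rightarrow> ('a, 'b) monoid_scheme \<Rightarrow> bool" where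
  "p_group p G \<longleftrightarrow> group G \<and> finite (carrier G) \<and> (\<exists>n. order G = p ^ n)"

definition elem_abelian :: "nat \<Rightarrow> ('a, 'b) monoid_scheme \<Rightarrow> bool" where
  "elem_abelian p A \<longleftrightarrow> comm_group A \<and> (\<forall>x \<in> carrier A. x [^]\<^bsub>A\<^esub> p = \<one>\<^bsub>A\<^esub>)"

definition special_p_group :: "nat \<Rightarrow> ('a, 'b) monoid_scheme \<Rightarrow> bool" where
  "special_p_group p G \<longleftrightarrow> p_group p G \<and>
     derived G (carrier G) = frattini G \<and> frattini G = grp_center G \<and>
     elem_abelian p (subgroup_generated G (grp_center G)) \<and>
     elem_abelian p (G Mod grp_center G)"

definition extraspecial_p_group :: "nat \<Rightarrow> ('a, 'b) monoid_scheme \<Rightarrow> bool" where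
  "extraspecial_p_group p G \<longleftrightarrow> special_p_group p G \<and>
     cyclic_group (subgroup_generated G (grp_center G)) \<and> card (grp_center G) = p"

text \<open>Words in the free group F_k: a word is represented by a list of letters
  (i, e) standing for x_i (e = True) or x_i^{-1} (e = False), with i < k.
  Every element of F_k is represented by such a list, and the word map depends
  only on the represented element.\<close>
definition is_word :: "nat \<Rightarrow> (nat \<times> bool) list \<Rightarrow> bool" where
  "is_word k w \<longleftrightarrow> (\<forall>l \<in> set w. fst l < k)"

fun word_eval :: "('a, 'b) monoid_scheme \<Rightarrow> (nat \<times> bool) list \<Rightarrow> (nat \<Rightarrow> 'a) \<Rightarrow> 'a" where
  "word_eval G [] g = \<one>\<^bsub>G\<^esub>"
| "word_eval G ((i, e) # w) g =
     (if e then g i else inv\<^bsub>G\<^esub> (g i)) \<otimes>\<^bsub>G\<^esub> word_eval G w g"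

text \<open>G^k as extensional functions on {0..<k}.\<close>
definition tuples :: "('a, 'b) monoid_scheme \<Rightarrow> nat \<Rightarrow> (nat \<Rightarrow> 'a) set" where
  "tuples G k = PiE {..<k} (\<lambda>_. carrier G)"

definition word_image :: "('a, 'b) monoid_scheme \<Rightarrow> nat \<Rightarrow> (nat \<times> bool) list \<Rightarrow> 'a set" where
  "word_image G k w = (\<lambda>t. word_eval G w t) ` tuples G k"

definition word_prob :: "('a, 'b) monoid_scheme \<Rightarrow> nat \<Rightarrow> (nat \<times> bool) list \<Rightarrow> 'a \<Rightarrow> real" where
  "word_prob G k w x = real (card {t \<in> tuples G k. word_eval G w t = x}) / real (card (carrier G)) ^ k"

definition amit_ashurst :: "('a, 'b) monoid_scheme \<Rightarrow> bool" where
  "amit_ashurst G \<longleftrightarrow> (\<forall>k \<ge> 1. \<forall>w. is_word k w \<longrightarrow>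
     (\<forall>x \<in> word_image G k w. word_prob G k w x \<ge> 1 / real (card (carrier G))))"

end

theory Submission
  imports Defs
begin

text \<open>
  In a group of class two, collecting the occurrences of the variable \<open>x\<^sub>i\<close> gives
  \<open>w(t[i:=x]) = x\<^sup>e \<cdot> w(t[i:=1]) \<cdot> [x, b]\<close>, where \<open>e\<close> is the exponent sum of \<open>x\<^sub>i\<close> and \<open>b\<close>
  does not depend on \<open>x\<close>. Count the fibres of the word map slice by slice in one coordinate.
  If \<open>p\<close> does not divide \<open>e\<close> for some \<open>i\<close>, then \<open>x \<mapsto> x\<^sup>e a [x, b]\<close> is a bijection of \<open>G\<close>, because
  \<open>x \<mapsto> x\<^sup>e\<close> is injective modulo the centre \<open>Z\<close>, of order and exponent \<open>p\<close>; so every value is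
  taken exactly \<open>|G|\<^sup>k\<^sup>-\<^sup>1\<close> times. If \<open>p\<close> divides every exponent sum, then \<open>x \<mapsto> x\<^sup>e [x, b]\<close> is a
  homomorphism \<open>G \<rightarrow> Z\<close>, and a slice meets a fibre in \<open>|G|/p\<close> points unless that homomorphism is
  trivial. Modulo \<open>Z\<close>, \<open>b\<close> is a product of powers of the other coordinates \<open>t\<^sub>j\<close>. If one of these
  exponents is prime to \<open>p\<close>, the homomorphism is trivial for at most \<open>p\<close> values of \<open>t\<^sub>j\<close>, and
  \<open>|G| \<ge> 2p\<close> compensates for the lost slices. Otherwise \<open>b\<close> is constant modulo \<open>Z\<close>, so either
  every slice meets the fibre or the word map is constantly \<open>1\<close>.
\<close>

section \<open>Centre and commutators\<close>

lemma grp_center_subset: "grp_center G \<subseteq> carrier G"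
  by (auto simp: grp_center_def)

lemma grp_center_commute:
  "z \<in> grp_center G \<Longrightarrow> x \<in> carrier G \<Longrightarrow> z \<otimes>\<^bsub>G\<^esub> x = x \<otimes>\<^bsub>G\<^esub> z"
  unfolding grp_center_def by blast

lemma grp_center_memI:
  "z \<in> carrier G \<Longrightarrow> (\<And>x. x \<in> carrier G \<Longrightarrow> z \<otimes>\<^bsub>G\<^esub> x = x \<otimes>\<^bsub>G\<^esub> z) \<Longrightarrow> z \<in> grp_center G"
  unfolding grp_center_def by blast

definition commutator :: "('a, 'b) monoid_scheme \<Rightarrow> 'a \<Rightarrow> 'a \<Rightarrow> 'a" where
  "commutator G a b = inv\<^bsub>G\<^esub> a \<otimes>\<^bsub>G\<^esub> inv\<^bsub>G\<^esub> b \<otimes>\<^bsub>G\<^esub> a \<otimes>\<^bsub>G\<^esub> b"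

context group
begin

abbreviation Z :: "'a set" where "Z \<equiv> grp_center G"

lemma center_closed: "z \<in> Z \<Longrightarrow> z \<in> carrier G"
  by (rule subsetD[OF grp_center_subset])

lemma grp_center_subgroup: "subgroup Z G"
proof (rule subgroupI)
  show "Z \<subseteq> carrier G" by (rule grp_center_subset)
  show "Z \<noteq> {}" using grp_center_memI[of \<one> G] by auto
next
  fix a assume a: "a \<in> Z"
  have ac: "a \<in> carrier G" using center_closed[OF a] .
  show "inv a \<in> Z"
  proof (rule grp_center_memI)
    fix x assume x: "x \<in> carrier G"
    have "a \<otimes> (inv a \<otimes> x) = a \<otimes> (x \<otimes> inv a)"
      using grp_center_commute[OF a x] ac x by (simp add: m_assoc[symmetric]) (simp add: m_assoc)
    then show "inv a \<otimes> x = x \<otimes> inv a" using ac x by simp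
  qed (use ac in simp)
next
  fix a b assume a: "a \<in> Z" and b: "b \<in> Z"
  have ac: "a \<in> carrier G" and bc: "b \<in> carrier G" using a b by (simp_all add: center_closed)
  show "a \<otimes> b \<in> Z"
  proof (rule grp_center_memI)
    fix x assume x: "x \<in> carrier G"
    have "a \<otimes> b \<otimes> x = a \<otimes> (x \<otimes> b)" using grp_center_commute[OF b x] x ac bc by (simp add: m_assoc)
    also have "\<dots> = x \<otimes> (a \<otimes> b)"
      using grp_center_commute[OF a x] x ac bc by (simp add: m_assoc[symmetric])
    finally show "a \<otimes> b \<otimes> x = x \<otimes> (a \<otimes> b)" .
  qed (use ac bc in simp)
qed

lemma grp_center_normal: "Z \<lhd> G"
  unfolding normal_inv_iff
proof (intro conjI grp_center_subgroup ballI)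
  fix x h assume x: "x \<in> carrier G" and h: "h \<in> Z"
  have "x \<otimes> h \<otimes> inv x = h"
    using grp_center_commute[OF h x, symmetric] center_closed[OF h] x by (simp add: m_assoc)
  then show "x \<otimes> h \<otimes> inv x \<in> Z" using h by simp
qed

lemma center_one_closed: "\<one> \<in> Z"
  by (rule subgroup.one_closed[OF grp_center_subgroup])

lemma center_mult_closed: "a \<in> Z \<Longrightarrow> b \<in> Z \<Longrightarrow> a \<otimes> b \<in> Z"
  by (rule subgroup.m_closed[OF grp_center_subgroup])

lemma center_inv_closed: "a \<in> Z \<Longrightarrow> inv a \<in> Z"
  by (rule subgroup.m_inv_closed[OF grp_center_subgroup])

lemma center_int_pow_closed: "a \<in> Z \<Longrightarrow> a [^] (n::int) \<in> Z"
  by (rule subgroup_int_pow_closed[OF grp_center_subgroup])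

lemma center_nat_pow_closed: "a \<in> Z \<Longrightarrow> a [^] (n::nat) \<in> Z"
  using center_int_pow_closed[of a "int n"] by (simp add: int_pow_int)

lemma center_move_right: "z \<in> Z \<Longrightarrow> x \<in> carrier G \<Longrightarrow> y \<in> carrier G \<Longrightarrow> x \<otimes> z \<otimes> y = x \<otimes> y \<otimes> z"
  using center_closed grp_center_commute[of z G y] by (simp add: m_assoc)

lemma mult_inv_cancel_left [simp]: "x \<in> carrier G \<Longrightarrow> y \<in> carrier G \<Longrightarrow> x \<otimes> (inv x \<otimes> y) = y"
  by (simp add: m_assoc[symmetric])

lemma inv_mult_cancel_left [simp]: "x \<in> carrier G \<Longrightarrow> y \<in> carrier G \<Longrightarrow> inv x \<otimes> (x \<otimes> y) = y"
  by (simp add: m_assoc[symmetric])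

lemma commutator_closed [simp]: "a \<in> carrier G \<Longrightarrow> b \<in> carrier G \<Longrightarrow> commutator G a b \<in> carrier G"
  by (simp add: commutator_def)

lemma commutator_one_left [simp]: "a \<in> carrier G \<Longrightarrow> commutator G \<one> a = \<one>"
  by (simp add: commutator_def)

lemma commutator_one_right [simp]: "a \<in> carrier G \<Longrightarrow> commutator G a \<one> = \<one>"
  by (simp add: commutator_def)

lemma commutator_swap: "a \<in> carrier G \<Longrightarrow> b \<in> carrier G \<Longrightarrow> a \<otimes> b = b \<otimes> a \<otimes> commutator G a b"
  by (simp add: commutator_def m_assoc)

lemma commutator_unique:
  assumes "a \<in> carrier G" "b \<in> carrier G" "z \<in> carrier G" "a \<otimes> b = b \<otimes> a \<otimes> z"
  shows "z = commutator G a b"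
  using assms commutator_swap[of a b] by simp

lemma commutator_center_left: "z \<in> Z \<Longrightarrow> b \<in> carrier G \<Longrightarrow> commutator G z b = \<one>"
  using commutator_unique[of z b \<one>] grp_center_commute[of z G b] center_closed by simp

lemma commutator_center_right: "z \<in> Z \<Longrightarrow> b \<in> carrier G \<Longrightarrow> commutator G b z = \<one>"
  using commutator_unique[of b z \<one>] grp_center_commute[of z G b] center_closed by simp

lemma center_if_commutator_trivial:
  assumes a: "a \<in> carrier G" and triv: "\<And>x. x \<in> carrier G \<Longrightarrow> commutator G x a = \<one>"
  shows "a \<in> Z"
proof (rule grp_center_memI[OF a])
  fix x assume "x \<in> carrier G"
  then show "a \<otimes> x = x \<otimes> a" using commutator_swap[of x a] triv a by simp
qed

end

section \<open>Groups of class two\<close>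

locale class2_group = group G for G (structure) +
  assumes commutator_central: "a \<in> carrier G \<Longrightarrow> b \<in> carrier G \<Longrightarrow> commutator G a b \<in> Z"
begin

lemma commutator_mult_right:
  assumes a: "a \<in> carrier G" and b: "b \<in> carrier G" and c: "c \<in> carrier G"
  shows "commutator G a (b \<otimes> c) = commutator G a b \<otimes> commutator G a c"
proof -
  have ab: "commutator G a b \<in> Z" using commutator_central a b by auto
  have abc: "commutator G a b \<in> carrier G" and acc: "commutator G a c \<in> carrier G" using a b c by auto
  have "a \<otimes> (b \<otimes> c) = (b \<otimes> a \<otimes> commutator G a b) \<otimes> c"
    using a b c by (simp add: m_assoc[symmetric] commutator_swap[OF a b])
  also have "\<dots> = b \<otimes> (a \<otimes> c) \<otimes> commutator G a b"
    using a b c abc by (simp add: m_assoc grp_center_commute[OF ab c])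
  also have "\<dots> = b \<otimes> (c \<otimes> a \<otimes> commutator G a c) \<otimes> commutator G a b"
    by (simp only: commutator_swap[OF a c])
  also have "\<dots> = (b \<otimes> c) \<otimes> a \<otimes> (commutator G a b \<otimes> commutator G a c)"
    using a b c abc acc by (simp add: m_assoc grp_center_commute[OF ab acc])
  finally show ?thesis using a b c abc acc by (intro commutator_unique[symmetric]) simp_all
qed

lemma commutator_mult_left:
  assumes a: "a \<in> carrier G" and b: "b \<in> carrier G" and c: "c \<in> carrier G"
  shows "commutator G (a \<otimes> b) c = commutator G a c \<otimes> commutator G b c"
proof -
  have ac: "commutator G a c \<in> Z" using commutator_central a c by auto
  have bcc: "commutator G b c \<in> carrier G" and acc: "commutator G a c \<in> carrier G" using a b c by auto
  have "a \<otimes> b \<otimes> c = a \<otimes> (c \<otimes> b \<otimes> commutator G b c)"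
    using a b c by (simp add: m_assoc commutator_swap[OF b c, symmetric])
  also have "\<dots> = (a \<otimes> c) \<otimes> b \<otimes> commutator G b c" using a b c bcc by (simp add: m_assoc)
  also have "\<dots> = (c \<otimes> a \<otimes> commutator G a c) \<otimes> b \<otimes> commutator G b c"
    by (simp only: commutator_swap[OF a c])
  also have "\<dots> = c \<otimes> (a \<otimes> b) \<otimes> (commutator G a c \<otimes> commutator G b c)"
    using a b c bcc acc by (simp add: m_assoc grp_center_commute[OF ac b])
  finally show ?thesis using a b c bcc acc by (intro commutator_unique[symmetric]) simp_all
qed

lemma commutator_inv_right:
  assumes a: "a \<in> carrier G" and b: "b \<in> carrier G"
  shows "commutator G a (inv b) = inv (commutator G a b)"
proof -
  have "commutator G a b \<otimes> commutator G a (inv b) = \<one>"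
    using commutator_mult_right[OF a b inv_closed[OF b]] a b by simp
  then show ?thesis using a b by (intro inv_equality[symmetric]) (simp_all add: inv_comm)
qed

lemma commutator_nat_pow_right:
  assumes a: "a \<in> carrier G" and b: "b \<in> carrier G"
  shows "commutator G a (b [^] (n::nat)) = commutator G a b [^] n"
  by (induction n) (simp_all add: a b commutator_mult_right)

lemma commutator_nat_pow_left:
  assumes a: "a \<in> carrier G" and b: "b \<in> carrier G"
  shows "commutator G (a [^] (n::nat)) b = commutator G a b [^] n"
  by (induction n) (simp_all add: a b commutator_mult_left)

lemma commutator_int_pow_right:
  assumes a: "a \<in> carrier G" and b: "b \<in> carrier G"
  shows "commutator G a (b [^] (n::int)) = commutator G a b [^] n"
  using a b by (simp add: int_pow_def2 commutator_inv_right commutator_nat_pow_right del: pow_nat)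

lemma commutator_flip:
  assumes a: "a \<in> carrier G" and b: "b \<in> carrier G"
  shows "commutator G b a = inv (commutator G a b)"
proof (rule commutator_unique[symmetric])
  have "commutator G a b \<in> Z" using commutator_central a b by auto
  then show "b \<otimes> a = a \<otimes> b \<otimes> inv (commutator G a b)"
    using commutator_swap[OF a b] a b center_closed by (simp add: m_assoc)
qed (use a b in simp_all)

lemma nat_pow_mult_commutator:
  fixes n :: nat
  assumes a: "a \<in> carrier G" and b: "b \<in> carrier G"
  shows "\<exists>m. 2 * m = n * (n - 1) \<and> (a \<otimes> b) [^] n = a [^] n \<otimes> b [^] n \<otimes> commutator G b a [^] m"
proof (induction n)
  case 0
  then show ?case using a b by simp
next
  case (Suc n)
  then obtain m where m: "2 * m = n * (n - 1)"
    and IH: "(a \<otimes> b) [^] n = a [^] n \<otimes> b [^] n \<otimes> commutator G b a [^] m" by blast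
  define c where "c = commutator G b a"
  have cZ: "c \<in> Z" unfolding c_def using commutator_central[OF b a] .
  have cc: "c \<in> carrier G" using center_closed[OF cZ] .
  have cmZ: "c [^] m \<in> Z" using center_nat_pow_closed[OF cZ] .
  have slide: "b [^] n \<otimes> a = a \<otimes> b [^] n \<otimes> c [^] n"
    using commutator_swap[OF nat_pow_closed[OF b] a] commutator_nat_pow_left[OF b a] unfolding c_def by simp
  have "(a \<otimes> b) [^] Suc n = a [^] n \<otimes> b [^] n \<otimes> c [^] m \<otimes> a \<otimes> b"
    using IH a b cc unfolding c_def by (simp add: m_assoc)
  also have "\<dots> = a [^] n \<otimes> (b [^] n \<otimes> a) \<otimes> c [^] m \<otimes> b"
    using a b cc center_move_right[OF cmZ, of "a [^] n \<otimes> b [^] n" a] by (simp add: m_assoc)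
  also have "\<dots> = a [^] n \<otimes> a \<otimes> b [^] n \<otimes> (c [^] n \<otimes> c [^] m) \<otimes> b"
    using a b cc by (simp add: slide m_assoc)
  also have "\<dots> = a [^] Suc n \<otimes> b [^] Suc n \<otimes> c [^] (n + m)"
    using a b cc center_move_right[OF center_nat_pow_closed[OF cZ], of "a [^] n \<otimes> a \<otimes> b [^] n" b]
    by (simp add: nat_pow_mult m_assoc)
  finally show ?case unfolding c_def using m
    by (intro exI[of _ "n + m"]) (cases n; simp add: algebra_simps)
qed

lemma int_pow_mult_mod_center:
  assumes a: "a \<in> carrier G" and b: "b \<in> carrier G"
  shows "\<exists>c\<in>Z. (a \<otimes> b) [^] (n::int) = a [^] n \<otimes> b [^] n \<otimes> c"
proof (cases "n \<ge> 0")
  case True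
  then obtain k :: nat where k: "n = int k" by (metis nonneg_eq_int)
  obtain m :: nat where "(a \<otimes> b) [^] k = a [^] k \<otimes> b [^] k \<otimes> commutator G b a [^] m"
    using nat_pow_mult_commutator[OF a b, of k] by auto
  then show ?thesis using k center_nat_pow_closed[OF commutator_central[OF b a]] by (auto simp: int_pow_int)
next
  case False
  then obtain k :: nat where k: "n = - int k" by (metis nonneg_eq_int neg_0_le_iff_le nle_le minus_minus)
  define A where "A = inv (a [^] k)"
  define B where "B = inv (b [^] k)"
  have A: "A \<in> carrier G" and B: "B \<in> carrier G" unfolding A_def B_def using a b by auto
  obtain m :: nat where e: "(a \<otimes> b) [^] k = a [^] k \<otimes> b [^] k \<otimes> commutator G b a [^] m"
    using nat_pow_mult_commutator[OF a b, of k] by auto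
  define z where "z = commutator G b a [^] m"
  have zZ: "z \<in> Z" unfolding z_def using center_nat_pow_closed[OF commutator_central[OF b a]] .
  have zc: "z \<in> carrier G" using center_closed[OF zZ] .
  have "(a \<otimes> b) [^] n = inv z \<otimes> (B \<otimes> A)"
    using k e a b zc unfolding A_def B_def z_def[symmetric] by (simp add: int_pow_neg_int inv_mult_group m_assoc)
  also have "\<dots> = inv z \<otimes> (A \<otimes> B \<otimes> commutator G B A)" using commutator_swap[OF B A] by simp
  also have "\<dots> = A \<otimes> B \<otimes> (commutator G B A \<otimes> inv z)"
    using A B zc grp_center_commute[OF center_inv_closed[OF zZ], of "A \<otimes> B \<otimes> commutator G B A"]
    by (simp add: m_assoc)
  finally show ?thesis
    using k a b center_mult_closed[OF commutator_central[OF B A] center_inv_closed[OF zZ]]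
    unfolding A_def B_def by (auto simp: int_pow_neg_int)
qed

end

section \<open>Collecting one variable of a word\<close>

fun exp_sum :: "nat \<Rightarrow> (nat \<times> bool) list \<Rightarrow> int" where
  "exp_sum i [] = 0"
| "exp_sum i ((j, e) # w) = (if j = i then (if e then 1 else -1) else 0) + exp_sum i w"

text \<open>Moving each occurrence of \<open>x\<^sub>i\<close> to the front past the letters preceding it yields
  \<open>w(t[i:=x]) = x\<^sup>e \<cdot> w(t[i:=1]) \<cdot> [x, cofactor G i w t]\<close> (\<open>word_eval_update_var\<close>);
  \<open>cofactor_exp i j w\<close> is the exponent of \<open>t\<^sub>j\<close> in the cofactor modulo the centre.\<close>

fun cofactor :: "('a, 'b) monoid_scheme \<Rightarrow> nat \<Rightarrow> (nat \<times> bool) list \<Rightarrow> (nat \<Rightarrow> 'a) \<Rightarrow> 'a" where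
  "cofactor G i [] t = \<one>\<^bsub>G\<^esub>"
| "cofactor G i ((j, e) # w) t = (if j = i then cofactor G i w t
     else (if e then t j else inv\<^bsub>G\<^esub> (t j)) [^]\<^bsub>G\<^esub> (- exp_sum i w) \<otimes>\<^bsub>G\<^esub> cofactor G i w t)"

fun cofactor_exp :: "nat \<Rightarrow> nat \<Rightarrow> (nat \<times> bool) list \<Rightarrow> int" where
  "cofactor_exp i j [] = 0"
| "cofactor_exp i j ((l, e) # w) =
     (if l = i then 0 else if l = j then (if e then - exp_sum i w else exp_sum i w) else 0) + cofactor_exp i j w"

lemma cofactor_update_self: "cofactor G i w (t(i:=x)) = cofactor G i w t"
  by (induction w) auto

lemma is_word_Cons: "is_word k (l # w) \<longleftrightarrow> fst l < k \<and> is_word k w"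
  by (simp add: is_word_def)

lemma tuples_apply: "t \<in> tuples G k \<Longrightarrow> j < k \<Longrightarrow> t j \<in> carrier G"
  by (auto simp: tuples_def)

lemma tuples_update: "t \<in> tuples G k \<Longrightarrow> i < k \<Longrightarrow> x \<in> carrier G \<Longrightarrow> t(i:=x) \<in> tuples G k"
  by (auto simp: tuples_def PiE_iff extensional_def)

context group
begin

lemma word_eval_closed: "is_word k w \<Longrightarrow> t \<in> tuples G k \<Longrightarrow> word_eval G w t \<in> carrier G"
proof (induction w)
  case (Cons l w)
  then show ?case by (cases l) (auto simp: is_word_Cons tuples_apply)
qed simp

lemma cofactor_closed: "is_word k w \<Longrightarrow> t \<in> tuples G k \<Longrightarrow> cofactor G i w t \<in> carrier G"
proof (induction w)
  case (Cons l w)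
  then show ?case by (cases l) (auto simp: is_word_Cons tuples_apply)
qed simp

lemma word_eval_all_one:
  "(\<And>j. j < k \<Longrightarrow> t j = \<one>) \<Longrightarrow> is_word k w \<Longrightarrow> word_eval G w t = \<one>"
proof (induction w)
  case (Cons l w)
  then show ?case by (cases l) (auto simp: is_word_Cons)
qed simp

end

context class2_group
begin

lemma mult_commutator_form:
  fixes e :: int
  assumes x: "x \<in> carrier G" and y: "y \<in> carrier G" and A: "A \<in> carrier G" and B: "B \<in> carrier G"
  shows "y \<otimes> (x [^] e \<otimes> A \<otimes> commutator G x B) = x [^] e \<otimes> (y \<otimes> A) \<otimes> commutator G x (y [^] (- e) \<otimes> B)"
proof -
  have "commutator G y (x [^] e) = commutator G x y [^] (- e)"
    using x y by (simp add: commutator_int_pow_right commutator_flip[OF x y] int_pow_inv int_pow_neg)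
  then have slide: "y \<otimes> x [^] e = x [^] e \<otimes> y \<otimes> commutator G x y [^] (- e)"
    using commutator_swap[OF y int_pow_closed[OF x]] by simp
  have cZ: "commutator G x y [^] (- e) \<in> Z" using center_int_pow_closed[OF commutator_central[OF x y]] .
  have "y \<otimes> (x [^] e \<otimes> A \<otimes> commutator G x B) = y \<otimes> x [^] e \<otimes> A \<otimes> commutator G x B"
    using x y A B by (simp add: m_assoc)
  also have "\<dots> = x [^] e \<otimes> y \<otimes> commutator G x y [^] (- e) \<otimes> A \<otimes> commutator G x B" unfolding slide ..
  also have "\<dots> = x [^] e \<otimes> (y \<otimes> A) \<otimes> commutator G x (y [^] (- e) \<otimes> B)"
    using x y A B center_move_right[OF cZ, of "x [^] e \<otimes> y" A] center_closed[OF cZ]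
    by (simp add: commutator_mult_right commutator_int_pow_right m_assoc)
  finally show ?thesis .
qed

lemma mult_left_commute_mod_center:
  assumes u: "u \<in> carrier G" and v: "v \<in> carrier G" and B: "B \<in> carrier G" and z: "z \<in> Z"
  shows "u \<otimes> (v \<otimes> B \<otimes> z) = v \<otimes> (u \<otimes> B) \<otimes> (commutator G u v \<otimes> z)"
proof -
  have cZ: "commutator G u v \<in> Z" using commutator_central[OF u v] .
  have "u \<otimes> (v \<otimes> B \<otimes> z) = v \<otimes> u \<otimes> commutator G u v \<otimes> B \<otimes> z"
    using u v B center_closed[OF z] by (simp add: commutator_swap[OF u v, symmetric] m_assoc)
  also have "\<dots> = v \<otimes> (u \<otimes> B) \<otimes> (commutator G u v \<otimes> z)"
    using center_move_right[OF cZ, of "v \<otimes> u" B] u v B center_closed[OF z] center_closed[OF cZ]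
    by (simp add: m_assoc)
  finally show ?thesis .
qed

lemma word_eval_update_var:
  assumes "is_word k w" and t: "t \<in> tuples G k" and i: "i < k" and x: "x \<in> carrier G"
  shows "word_eval G w (t(i:=x)) =
    x [^] exp_sum i w \<otimes> word_eval G w (t(i:=\<one>)) \<otimes> commutator G x (cofactor G i w t)"
  using assms(1)
proof (induction w)
  case Nil
  then show ?case using x by simp
next
  case (Cons l w)
  obtain j e where l: "l = (j, e)" by (cases l)
  have w: "is_word k w" and j: "j < k" using Cons.prems l by (auto simp: is_word_Cons)
  define E where "E = exp_sum i w"
  define A where "A = word_eval G w (t(i:=\<one>))"
  define B where "B = cofactor G i w t"
  have A: "A \<in> carrier G" unfolding A_def using word_eval_closed[OF w tuples_update[OF t i]] by simp
  have B: "B \<in> carrier G" unfolding B_def by (rule cofactor_closed[OF w t])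
  note IH = Cons.IH[OF w, folded E_def A_def B_def]
  show ?case
  proof (cases "j = i")
    case True
    define s :: int where "s = (if e then 1 else -1)"
    have letter: "(if e then x else inv x) = x [^] s" using x by (simp add: s_def int_pow_neg[of x 1])
    have "word_eval G (l # w) (t(i:=x)) = (if e then x else inv x) \<otimes> word_eval G w (t(i:=x))"
      using l True by simp
    also have "\<dots> = x [^] s \<otimes> (x [^] E \<otimes> A \<otimes> commutator G x B)" unfolding letter IH ..
    also have "\<dots> = x [^] (s + E) \<otimes> A \<otimes> commutator G x B"
      using x A B by (simp add: int_pow_mult m_assoc)
    moreover have li: "l = (i, e)" using l True by simp
    then have "word_eval G (l # w) (t(i:=\<one>)) = A"
      using A unfolding A_def by (cases e) (simp_all only: word_eval.simps fun_upd_same if_True if_False inv_one l_one)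
    moreover have "exp_sum i (l # w) = s + E" unfolding li s_def E_def by simp
    moreover have "cofactor G i (l # w) t = B" unfolding li B_def by simp
    ultimately show ?thesis by (simp only:)
  next
    case False
    define y where "y = (if e then t j else inv (t j))"
    have y: "y \<in> carrier G" unfolding y_def using tuples_apply[OF t j] by auto
    have "word_eval G (l # w) (t(i:=x)) = y \<otimes> word_eval G w (t(i:=x))"
      using l False unfolding y_def by simp
    also have "\<dots> = x [^] E \<otimes> (y \<otimes> A) \<otimes> commutator G x (y [^] (- E) \<otimes> B)"
      unfolding IH by (rule mult_commutator_form[OF x y A B])
    moreover have "word_eval G (l # w) (t(i:=\<one>)) = y \<otimes> A"
      unfolding l y_def A_def using False by (simp only: word_eval.simps fun_upd_other not_False_eq_True)
    moreover have "exp_sum i (l # w) = E" "cofactor G i (l # w) t = y [^] (- E) \<otimes> B"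
      using l False unfolding E_def B_def y_def by simp_all
    ultimately show ?thesis by (simp only:)
  qed
qed

lemma cofactor_update_other:
  assumes w: "is_word k w" and t: "t \<in> tuples G k" and j: "j < k" and y: "y \<in> carrier G" and ji: "j \<noteq> i"
  shows "\<exists>z\<in>Z. cofactor G i w (t(j:=y)) = y [^] cofactor_exp i j w \<otimes> cofactor G i w (t(j:=\<one>)) \<otimes> z"
  using w
proof (induction w)
  case Nil
  then show ?case using y center_one_closed by (intro bexI[of _ \<one>]) auto
next
  case (Cons l w)
  obtain m e where l: "l = (m, e)" by (cases l)
  have w: "is_word k w" and m: "m < k" using Cons.prems l by (auto simp: is_word_Cons)
  obtain z where z: "z \<in> Z"
    and IH: "cofactor G i w (t(j:=y)) = y [^] cofactor_exp i j w \<otimes> cofactor G i w (t(j:=\<one>)) \<otimes> z"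
    using Cons.IH[OF w] by blast
  define E where "E = exp_sum i w"
  define c where "c = cofactor_exp i j w"
  define B where "B = cofactor G i w (t(j:=\<one>))"
  have B: "B \<in> carrier G" unfolding B_def using cofactor_closed[OF w tuples_update[OF t j]] by simp
  have yc: "y [^] c \<in> carrier G" using y by simp
  have zc: "z \<in> carrier G" using center_closed[OF z] .
  consider "m = i" | "m \<noteq> i" "m = j" | "m \<noteq> i" "m \<noteq> j" by blast
  then show ?case
  proof cases
    case 1
    then have "cofactor G i (l # w) s = cofactor G i w s" "cofactor_exp i j (l # w) = cofactor_exp i j w" for s
      using l by simp_all
    then show ?thesis using IH z by (simp only:) blast
  next
    case 2
    define d where "d = (if e then - E else E)"
    have step: "cofactor G i (l # w) s = (if e then s j else inv (s j)) [^] (- E) \<otimes> cofactor G i w s" for s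
      using l 2 unfolding E_def by simp
    have "cofactor G i (l # w) (t(j:=y)) = (if e then y else inv y) [^] (- E) \<otimes> cofactor G i w (t(j:=y))"
      unfolding step by (simp only: fun_upd_same)
    also have "\<dots> = y [^] (d + c) \<otimes> B \<otimes> z"
      unfolding IH using y B zc by (simp add: d_def c_def B_def int_pow_inv int_pow_neg int_pow_mult m_assoc)
    moreover have "cofactor G i (l # w) (t(j:=\<one>)) = B"
      unfolding step B_def[symmetric] by (simp only: fun_upd_same) (simp add: B)
    moreover have "cofactor_exp i j (l # w) = d + c" using l 2 unfolding d_def c_def E_def by simp
    ultimately show ?thesis using z by (simp only:) blast
  next
    case 3
    define u where "u = (if e then t m else inv (t m)) [^] (- E)"
    have u: "u \<in> carrier G" unfolding u_def using tuples_apply[OF t m] by auto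
    have step: "cofactor G i (l # w) (t(j:=v)) = u \<otimes> cofactor G i w (t(j:=v))" for v
    proof -
      have "(t(j:=v)) m = t m" using 3 by simp
      then show ?thesis using l 3 unfolding u_def E_def by (simp only: cofactor.simps if_False)
    qed
    have "cofactor G i (l # w) (t(j:=y)) = u \<otimes> (y [^] c \<otimes> B \<otimes> z)"
      unfolding step IH c_def B_def ..
    also have "\<dots> = y [^] c \<otimes> (u \<otimes> B) \<otimes> (commutator G u (y [^] c) \<otimes> z)"
      by (rule mult_left_commute_mod_center[OF u yc B z])
    moreover have "cofactor G i (l # w) (t(j:=\<one>)) = u \<otimes> B" unfolding step B_def ..
    moreover have "cofactor_exp i j (l # w) = c" using l 3 unfolding c_def by simp
    ultimately show ?thesis using center_mult_closed[OF commutator_central[OF u yc] z] by (simp only:) blast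
  qed
qed

lemma commutator_cofactor_update_other:
  assumes w: "is_word k w" and t: "t \<in> tuples G k" and j: "j < k" and ji: "j \<noteq> i"
    and x: "x \<in> carrier G" and y: "y \<in> carrier G"
  shows "commutator G x (cofactor G i w (t(j:=y))) =
    commutator G x y [^] cofactor_exp i j w \<otimes> commutator G x (cofactor G i w (t(j:=\<one>)))"
proof -
  define B where "B = cofactor G i w (t(j:=\<one>))"
  have B: "B \<in> carrier G" unfolding B_def using cofactor_closed[OF w tuples_update[OF t j]] by simp
  obtain z where z: "z \<in> Z" "cofactor G i w (t(j:=y)) = y [^] cofactor_exp i j w \<otimes> B \<otimes> z"
    using cofactor_update_other[OF w t j y ji] unfolding B_def by blast
  show ?thesis
    unfolding z(2) B_def[symmetric]
    using x y B center_closed[OF z(1)] commutator_center_right[OF z(1) x]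
    by (simp add: commutator_mult_right commutator_int_pow_right)
qed

end

section \<open>Extraspecial groups of odd order\<close>

locale odd_extraspecial = class2_group +
  fixes p :: nat
  assumes prime_p: "Factorial_Ring.prime p" and odd_p: "odd p"
    and finite_carrier: "finite (carrier G)"
    and nat_pow_p_central: "x \<in> carrier G \<Longrightarrow> x [^] p \<in> Z"
    and center_exponent: "z \<in> Z \<Longrightarrow> z [^] p = \<one>"
    and card_center: "card Z = p"
    and center_proper: "Z \<noteq> carrier G"
begin

lemma two_p_le_card_carrier: "2 * p \<le> card (carrier G)"
proof -
  have p: "p \<ge> 2" using prime_p by (simp add: prime_ge_2_nat)
  have "Z \<subset> carrier G" using grp_center_subset[of G] center_proper by (rule psubsetI)
  then have "card Z < card (carrier G)"
    by (rule psubset_card_mono[OF finite_carrier])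
  moreover have lag: "card (rcosets Z) * p = card (carrier G)"
    using lagrange[OF grp_center_subgroup] card_center unfolding order_def by simp
  ultimately have "\<not> card (rcosets Z) \<le> 1"
    using mult_le_mono1[of "card (rcosets Z)" 1 p] card_center by auto
  then have "2 * p \<le> card (rcosets Z) * p" by (intro mult_le_mono1) linarith
  then show ?thesis using lag by simp
qed

lemma card_carrier_pos: "card (carrier G) > 0"
  using two_p_le_card_carrier prime_gt_0_nat[OF prime_p] by linarith

lemma nat_pow_p_mult:
  assumes a: "a \<in> carrier G" and b: "b \<in> carrier G"
  shows "(a \<otimes> b) [^] p = a [^] p \<otimes> b [^] p"
proof -
  obtain m where m: "2 * m = p * (p - 1)"
    and e: "(a \<otimes> b) [^] p = a [^] p \<otimes> b [^] p \<otimes> commutator G b a [^] m"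
    using nat_pow_mult_commutator[OF a b, of p] by blast
  have "p dvd 2 * m" using m by simp
  moreover have "\<not> p dvd 2"
  proof
    assume "p dvd 2"
    then have "p \<le> 2" by (simp add: dvd_imp_le)
    then have "p = 2" using prime_ge_2_nat[OF prime_p] by linarith
    then show False using odd_p by simp
  qed
  ultimately have "p dvd m" using prime_p by (simp add: prime_dvd_mult_iff)
  then obtain q where "m = p * q" by (rule dvdE)
  then have "commutator G b a [^] m = (commutator G b a [^] p) [^] q"
    using a b by (simp add: nat_pow_pow)
  also have "\<dots> = \<one>" using center_exponent[OF commutator_central[OF b a]] by simp
  finally show ?thesis using e a b by simp
qed

lemma int_pow_p_dvd_decompose:
  assumes a: "a \<in> carrier G" and "int p dvd e"
  obtains q where "a [^] e = (a [^] p) [^] (q::int)"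
  using assms by (auto simp: int_pow_pow int_pow_int[symmetric] elim!: dvdE)

lemma int_pow_central_if_p_dvd:
  assumes "a \<in> carrier G" and "int p dvd e"
  shows "a [^] e \<in> Z"
proof -
  obtain q where "a [^] e = (a [^] p) [^] (q::int)" using int_pow_p_dvd_decompose[OF assms] .
  then show ?thesis using center_int_pow_closed[OF nat_pow_p_central[OF assms(1)]] by simp
qed

lemma int_pow_mult_if_p_dvd:
  assumes a: "a \<in> carrier G" and b: "b \<in> carrier G" and d: "int p dvd e"
  shows "(a \<otimes> b) [^] e = a [^] e \<otimes> b [^] e"
proof -
  obtain q :: int where q: "e = int p * q" using d by (auto elim: dvdE)
  have pw: "x [^] e = (x [^] p) [^] q" if "x \<in> carrier G" for x
    using that q by (simp add: int_pow_pow int_pow_int[symmetric])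
  have ap: "a [^] p \<in> Z" and bp: "b [^] p \<in> Z" using nat_pow_p_central a b by auto
  have "(a \<otimes> b) [^] e = (a [^] p \<otimes> b [^] p) [^] q" using pw a b nat_pow_p_mult[OF a b] by simp
  also have "\<dots> = (a [^] p) [^] q \<otimes> (b [^] p) [^] q"
    using grp_center_commute[OF ap nat_pow_closed[OF b]] center_closed[OF ap] center_closed[OF bp]
    by (rule int_pow_mult_distrib)
  finally show ?thesis using pw a b by simp
qed

lemma int_pow_bezout:
  assumes u: "u \<in> carrier G" and nd: "\<not> int p dvd e"
  obtains a b :: int where "u = (u [^] p) [^] a \<otimes> (u [^] e) [^] b"
proof -
  have "coprime (int p) e" using nd prime_p
    by (metis prime_int_iff prime_nat_int_transfer coprime_commute prime_imp_coprime)
  then obtain a b where ab: "a * int p + b * e = 1"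
    by (metis bezout_int coprime_iff_gcd_eq_1)
  have "u = u [^] (a * int p + b * e)" using ab u by simp
  also have "\<dots> = (u [^] p) [^] a \<otimes> (u [^] e) [^] b"
    using u by (simp add: int_pow_mult int_pow_pow int_pow_int[symmetric] mult.commute)
  finally show ?thesis by (rule that)
qed

lemma center_if_int_pow_central:
  assumes "u \<in> carrier G" and "\<not> int p dvd e" and "u [^] e \<in> Z"
  shows "u \<in> Z"
proof -
  obtain a b :: int where "u = (u [^] p) [^] a \<otimes> (u [^] e) [^] b" using int_pow_bezout[OF assms(1,2)] .
  then show ?thesis
    using center_mult_closed[OF center_int_pow_closed[OF nat_pow_p_central[OF assms(1)]]
        center_int_pow_closed[OF assms(3)], of a b] by simp
qed

lemma center_eq_one_if_int_pow_eq_one: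
  assumes u: "u \<in> Z" and nd: "\<not> int p dvd e" and ue: "u [^] e = \<one>"
  shows "u = \<one>"
proof -
  obtain a b :: int where "u = (u [^] p) [^] a \<otimes> (u [^] e) [^] b"
    using int_pow_bezout[OF center_closed[OF u] nd] .
  then show ?thesis using center_exponent[OF u] ue by simp
qed

lemma twisted_pow_mult_center:
  assumes x: "x \<in> carrier G" and u: "u \<in> Z" and A: "A \<in> carrier G" and B: "B \<in> carrier G"
  shows "(x \<otimes> u) [^] e \<otimes> A \<otimes> commutator G (x \<otimes> u) B = x [^] e \<otimes> A \<otimes> commutator G x B \<otimes> u [^] (e::int)"
proof -
  have uc: "u \<in> carrier G" using center_closed[OF u] .
  have "(x \<otimes> u) [^] e = x [^] e \<otimes> u [^] e"
    using int_pow_mult_distrib[OF grp_center_commute[OF u x, symmetric] x uc] .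
  moreover have "commutator G (x \<otimes> u) B = commutator G x B"
    using commutator_mult_left[OF x uc B] commutator_center_left[OF u B] x B by simp
  ultimately show ?thesis
    using center_move_right[OF center_int_pow_closed[OF u], of "x [^] e" "A \<otimes> commutator G x B"] x A B uc
    by (simp add: m_assoc)
qed

lemma inj_on_twisted_pow:
  assumes nd: "\<not> int p dvd e" and A: "A \<in> carrier G" and B: "B \<in> carrier G"
  shows "inj_on (\<lambda>x. x [^] e \<otimes> A \<otimes> commutator G x B) (carrier G)"
proof (rule inj_onI)
  let ?f = "\<lambda>x. x [^] e \<otimes> A \<otimes> commutator G x B"
  fix x y assume x: "x \<in> carrier G" and y: "y \<in> carrier G" and eq: "?f x = ?f y"
  define u where "u = inv x \<otimes> y"
  have uc: "u \<in> carrier G" and yu: "y = x \<otimes> u" unfolding u_def using x y by simp_all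
  define D where "D = A \<otimes> commutator G x B"
  have D: "D \<in> carrier G" unfolding D_def using A B x by simp
  obtain c where c: "c \<in> Z" and pc: "(x \<otimes> u) [^] e = x [^] e \<otimes> u [^] e \<otimes> c"
    using int_pow_mult_mod_center[OF x uc] by blast
  define z where "z = c \<otimes> commutator G u B"
  have z: "z \<in> Z" unfolding z_def using center_mult_closed[OF c commutator_central[OF uc B]] .
  have zc: "z \<in> carrier G" and cc: "c \<in> carrier G" using center_closed z c by auto
  have "?f y = x [^] e \<otimes> u [^] e \<otimes> c \<otimes> A \<otimes> (commutator G x B \<otimes> commutator G u B)"
    unfolding yu pc commutator_mult_left[OF x uc B] ..
  also have "\<dots> = x [^] e \<otimes> u [^] e \<otimes> (c \<otimes> D \<otimes> commutator G u B)"
    using x uc cc A B unfolding D_def by (simp add: m_assoc)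
  also have "\<dots> = x [^] e \<otimes> (u [^] e \<otimes> z \<otimes> D)"
    using grp_center_commute[OF c D] grp_center_commute[OF z D] x uc cc zc A B D
    unfolding z_def by (simp add: m_assoc)
  finally have "x [^] e \<otimes> D = x [^] e \<otimes> (u [^] e \<otimes> z \<otimes> D)"
    using eq unfolding D_def by (simp add: m_assoc x A B)
  then have "u [^] e \<otimes> z = \<one>" using x uc zc D by simp
  then have "u [^] e = inv z" using uc zc by (simp add: inv_equality)
  then have uZ: "u \<in> Z"
    using center_if_int_pow_central[OF uc nd] center_inv_closed[OF z] by simp
  have "x [^] e \<otimes> D \<otimes> u [^] e = x [^] e \<otimes> D"
    using eq twisted_pow_mult_center[OF x uZ A B] unfolding yu D_def by (simp add: m_assoc x A B)
  then have "u [^] e = \<one>" using x uc D by simp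
  then show "x = y" using center_eq_one_if_int_pow_eq_one[OF uZ nd] yu x by simp
qed

lemma finite_center: "finite Z"
  using finite_carrier grp_center_subset by (rule finite_subset[rotated])

lemma mult_map_to_center_surj:
  assumes h_Z: "\<And>x. x \<in> carrier G \<Longrightarrow> h x \<in> Z"
    and h_mult: "\<And>x y. x \<in> carrier G \<Longrightarrow> y \<in> carrier G \<Longrightarrow> h (x \<otimes> y) = h x \<otimes> h y"
    and x1: "x1 \<in> carrier G" "h x1 \<noteq> \<one>" and z: "z \<in> Z"
  shows "\<exists>x\<in>carrier G. h x = z"
proof -
  have h_one: "h \<one> = \<one>"
    using h_mult[of \<one> \<one>] center_closed[OF h_Z[of \<one>]] by simp
  have h_pow: "h (x1 [^] n) = h x1 [^] n" for n :: nat
    by (induction n) (simp_all add: h_one h_mult x1(1))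
  have hx1: "h x1 \<in> carrier G" using center_closed[OF h_Z[OF x1(1)]] .
  have "ord (h x1) dvd p" using center_exponent[OF h_Z[OF x1(1)]] hx1 by (simp add: pow_eq_id)
  moreover have "ord (h x1) \<noteq> 1" using x1(2) ord_eq_1[OF hx1] by simp
  ultimately have "ord (h x1) = p" using prime_p by (metis prime_nat_iff)
  then have "generate G {h x1} = Z"
    using generate_pow_card[OF hx1] card_center finite_center h_Z[OF x1(1)]
      generate_subgroup_incl[OF _ grp_center_subgroup]
    by (intro card_subset_eq) auto
  then obtain n :: nat where "z = h x1 [^] n"
    using z generate_pow_on_finite_carrier[OF finite_carrier hx1] by auto
  then show ?thesis using h_pow[of n] x1(1) by blast
qed

lemma card_fibre_mult_map_to_center:
  assumes h_Z: "\<And>x. x \<in> carrier G \<Longrightarrow> h x \<in> Z"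
    and h_mult: "\<And>x y. x \<in> carrier G \<Longrightarrow> y \<in> carrier G \<Longrightarrow> h (x \<otimes> y) = h x \<otimes> h y"
    and x1: "x1 \<in> carrier G" "h x1 \<noteq> \<one>" and z: "z \<in> Z"
  shows "p * card {x\<in>carrier G. h x = z} = card (carrier G)"
proof -
  define K where "K = {x\<in>carrier G. h x = \<one>}"
  have fibre: "card {x\<in>carrier G. h x = y} = card K" if y: "y \<in> Z" for y
  proof -
    obtain x0 where x0: "x0 \<in> carrier G" "h x0 = y"
      using mult_map_to_center_surj[OF h_Z h_mult x1 y] by blast
    have yc: "y \<in> carrier G" using center_closed[OF y] .
    have "{x\<in>carrier G. h x = y} = (\<lambda>v. x0 \<otimes> v) ` K"
    proof (intro equalityI subsetI)
      fix x assume "x \<in> {x\<in>carrier G. h x = y}"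
      then have x: "x \<in> carrier G" "h x = y" by auto
      have "h x0 \<otimes> h (inv x0 \<otimes> x) = y \<otimes> \<one>" using h_mult[of x0 "inv x0 \<otimes> x"] x0 x yc by simp
      then have "inv x0 \<otimes> x \<in> K"
        using x0 x yc center_closed[OF h_Z[of "inv x0 \<otimes> x"]] unfolding K_def by simp
      then show "x \<in> (\<lambda>v. x0 \<otimes> v) ` K" using x0 x by (intro image_eqI[of _ _ "inv x0 \<otimes> x"]) simp_all
    qed (use x0 h_mult yc in \<open>auto simp: K_def\<close>)
    moreover have "inj_on (\<lambda>v. x0 \<otimes> v) K" using x0 unfolding K_def by (auto intro!: inj_onI)
    ultimately show ?thesis by (simp add: card_image)
  qed
  have "carrier G = (\<Union>y\<in>Z. {x\<in>carrier G. h x = y})" using h_Z by auto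
  then have "card (carrier G) = card (\<Union>y\<in>Z. {x\<in>carrier G. h x = y})" by simp
  also have "\<dots> = (\<Sum>y\<in>Z. card {x\<in>carrier G. h x = y})"
    by (rule card_UN_disjoint) (use finite_center finite_carrier in auto)
  also have "\<dots> = p * card K" using fibre card_center by simp
  finally show ?thesis using fibre[OF z] by simp
qed

end

lemma (in group) commutator_in_derived:
  assumes "a \<in> carrier G" "b \<in> carrier G"
  shows "commutator G a b \<in> derived G (carrier G)"
proof -
  have "commutator G a b = inv a \<otimes> inv b \<otimes> inv (inv a) \<otimes> inv (inv b)"
    unfolding commutator_def using assms by simp
  then have "commutator G a b \<in> derived_set G (carrier G)" using assms by blast
  then show ?thesis unfolding derived_def by (rule generate.incl)
qed

lemma (in group) derived_trivial_if_abelian: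
  assumes "grp_center G = carrier G"
  shows "derived G (carrier G) \<subseteq> {\<one>}"
  unfolding derived_def
proof (rule generate_subgroup_incl[OF _ triv_subgroup], rule subsetI)
  fix c assume "c \<in> derived_set G (carrier G)"
  then obtain a b where a: "a \<in> carrier G" and b: "b \<in> carrier G" and c: "c = a \<otimes> b \<otimes> inv a \<otimes> inv b"
    by blast
  have "a \<otimes> b = b \<otimes> a" using grp_center_commute[of a G b] assms a b by simp
  then show "c \<in> {\<one>}" using a b c by (simp add: m_assoc)
qed

lemma odd_extraspecialI:
  fixes G (structure)
  assumes p: "Factorial_Ring.prime p" "odd p" and ex: "extraspecial_p_group p G"
  shows "odd_extraspecial G p"
proof -
  have card_Z: "card (grp_center G) = p" and sp: "special_p_group p G"
    using ex unfolding extraspecial_p_group_def by auto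
  then have "group G" and fin: "finite (carrier G)" and der: "derived G (carrier G) = grp_center G"
    and Z_exp: "elem_abelian p (subgroup_generated G (grp_center G))"
    and quot_exp: "elem_abelian p (G Mod grp_center G)"
    unfolding special_p_group_def p_group_def by auto
  interpret group G by fact
  show ?thesis
  proof unfold_locales
    fix a b assume "a \<in> carrier G" "b \<in> carrier G"
    then show "commutator G a b \<in> Z" using commutator_in_derived der by simp
  next
    fix x assume x: "x \<in> carrier G"
    have "Z #> x \<in> carrier (G Mod Z)" using x unfolding carrier_FactGroup by blast
    then have "(Z #> x) [^]\<^bsub>G Mod Z\<^esub> p = \<one>\<^bsub>G Mod Z\<^esub>" using quot_exp unfolding elem_abelian_def by blast
    then have "Z #> x [^] p = Z" using normal.FactGroup_pow[OF grp_center_normal x] by simp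
    then show "x [^] p \<in> Z" using rcos_self[OF nat_pow_closed[OF x, of p] grp_center_subgroup] by simp
  next
    fix z assume "z \<in> Z"
    then have "z \<in> carrier (subgroup_generated G Z)"
      using subgroup.carrier_subgroup_generated_subgroup[OF grp_center_subgroup] by simp
    then show "z [^] p = \<one>" using Z_exp unfolding elem_abelian_def by (simp add: pow_subgroup_generated)
  next
    show "Z \<noteq> carrier G"
    proof
      assume "Z = carrier G"
      then have "card Z \<le> card {\<one>}" using derived_trivial_if_abelian der by (intro card_mono) auto
      then show False using card_Z prime_ge_2_nat[OF p(1)] by simp
    qed
  qed (use p fin card_Z in auto)
qed

section \<open>Counting tuples\<close>

lemma sum_PiE_update:
  assumes i: "i \<in> I" and c: "c \<in> B i"
  shows "(\<Sum>t\<in>PiE I B. f t) = (\<Sum>t\<in>PiE I (B(i:={c})). \<Sum>x\<in>B i. f (t(i:=x)))"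
proof -
  let ?h = "\<lambda>(t, x). t(i:=x)"
  have inj: "inj_on ?h (PiE I (B(i:={c})) \<times> B i)"
  proof (rule inj_onI, clarify)
    fix t x t' x'
    assume t: "t \<in> PiE I (B(i:={c}))" and t': "t' \<in> PiE I (B(i:={c}))" and eq: "t(i:=x) = t'(i:=x')"
    have "t i = t' i" using PiE_mem[OF t i] PiE_mem[OF t' i] by simp
    then show "t = t' \<and> x = x'" using eq by (metis fun_upd_idem_iff fun_upd_upd fun_upd_same)
  qed
  have "?h ` (PiE I (B(i:={c})) \<times> B i) = PiE I B"
  proof (intro equalityI subsetI)
    fix s assume s: "s \<in> PiE I B"
    then have "(s(i:=c), s i) \<in> PiE I (B(i:={c})) \<times> B i" using i c by (auto simp: PiE_iff extensional_def)
    then show "s \<in> ?h ` (PiE I (B(i:={c})) \<times> B i)" by (intro image_eqI[of _ _ "(s(i:=c), s i)"]) simp_all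
  qed (use i in \<open>auto simp: PiE_iff extensional_def split: if_splits\<close>)
  then have "(\<Sum>t\<in>PiE I B. f t) = (\<Sum>q\<in>PiE I (B(i:={c})) \<times> B i. f (?h q))"
    using sum.reindex[OF inj, of f] by simp
  then show ?thesis by (simp add: sum.cartesian_product case_prod_beta)
qed

lemma card_PiE_fixed_coords:
  assumes S: "S \<subseteq> {..<k}" and fixed: "\<And>l. l \<in> S \<Longrightarrow> card (B l) = 1"
    and free: "\<And>l. l \<notin> S \<Longrightarrow> B l = A"
  shows "card (PiE {..<k} B) = card A ^ (k - card S)"
proof -
  have "card (PiE {..<k} B) = (\<Prod>l\<in>{..<k}. card (B l))" by (simp add: card_PiE)
  also have "\<dots> = (\<Prod>l\<in>{..<k} - S. card (B l))"
    using S fixed by (intro prod.mono_neutral_right) auto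
  also have "\<dots> = card A ^ (k - card S)"
    using S free finite_subset[OF S] by (simp add: card_Diff_subset)
  finally show ?thesis .
qed

lemma PiE_const_induct:
  fixes k :: nat
  assumes t: "t \<in> PiE {..<k} (\<lambda>_. A)" and c: "c \<in> A"
    and base: "R (restrict (\<lambda>_. c) {..<k})"
    and step: "\<And>t i x. t \<in> PiE {..<k} (\<lambda>_. A) \<Longrightarrow> i < k \<Longrightarrow> x \<in> A \<Longrightarrow> R (t(i:=c)) \<Longrightarrow> R (t(i:=x))"
  shows "R t"
proof -
  have all: "R t" if "t \<in> PiE {..<k} (\<lambda>_. A)" "\<And>j. m \<le> j \<Longrightarrow> j < k \<Longrightarrow> t j = c" for m t
    using that
  proof (induction m arbitrary: t)
    case 0
    have "t = restrict (\<lambda>_. c) {..<k}"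
    proof
      fix j show "t j = restrict (\<lambda>_. c) {..<k} j"
        using 0 PiE_arb[OF 0(1), of j] by (cases "j < k") simp_all
    qed
    then show ?case using base by (simp only:)
  next
    case (Suc m)
    show ?case
    proof (cases "m < k")
      case True
      have tm: "t m \<in> A" using PiE_mem[OF Suc.prems(1)] True by simp
      have "t(m := c) \<in> PiE {..<k} (\<lambda>_. A)"
        using PiE_fun_upd[OF c Suc.prems(1), of m] True by (simp add: insert_absorb)
      moreover have "\<And>j. m \<le> j \<Longrightarrow> j < k \<Longrightarrow> (t(m := c)) j = c" using Suc.prems(2) by simp
      ultimately have "R (t(m := c))" by (rule Suc.IH)
      then have "R (t(m := t m))" by (rule step[OF Suc.prems(1) True tm])
      then show ?thesis by simp
    next
      case False
      show ?thesis by (rule Suc.IH[OF Suc.prems(1)]) (use False in auto)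
    qed
  qed
  show ?thesis by (rule all[OF t, of k]) simp
qed

lemma card_fibre_inj_on_endo:
  assumes "finite A" and "inj_on f A" and "f ` A \<subseteq> A" and "g \<in> A"
  shows "card {x\<in>A. f x = g} = 1"
proof -
  have "f ` A = A" using assms(1,3,2) by (rule endo_inj_surj)
  then obtain x0 where x0: "x0 \<in> A" "f x0 = g" using assms(4) by (metis imageE)
  have "{x\<in>A. f x = g} = {x0}"
  proof (intro equalityI subsetI)
    fix x assume "x \<in> {x\<in>A. f x = g}"
    then have "x \<in> A" "f x = f x0" using x0 by simp_all
    then show "x \<in> {x0}" using inj_onD[OF assms(2) _ _ x0(1)] by simp
  qed (use x0 in simp)
  then show ?thesis by simp
qed

context group
begin

abbreviation one_tuple :: "nat \<Rightarrow> nat \<Rightarrow> 'a" where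
  "one_tuple k \<equiv> restrict (\<lambda>_. \<one>) {..<k}"

abbreviation tuples_one_at :: "nat \<Rightarrow> nat \<Rightarrow> (nat \<Rightarrow> 'a) set" where
  "tuples_one_at k i \<equiv> PiE {..<k} ((\<lambda>_. carrier G)(i:={\<one>}))"

lemma tuples_induct:
  assumes "t \<in> tuples G k" and "R (one_tuple k)"
    and "\<And>t i x. t \<in> tuples G k \<Longrightarrow> i < k \<Longrightarrow> x \<in> carrier G \<Longrightarrow> R (t(i:=\<one>)) \<Longrightarrow> R (t(i:=x))"
  shows "R t"
  using assms(1)[unfolded tuples_def] one_closed assms(2) assms(3)[unfolded tuples_def]
  by (rule PiE_const_induct)

lemma one_tuple_in_tuples: "one_tuple k \<in> tuples G k"
  by (simp add: tuples_def)

lemma tuples_one_at_subset: "tuples_one_at k i \<subseteq> tuples G k"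
  unfolding tuples_def by (rule PiE_mono) simp

lemma card_tuples: "card (tuples G k) = card (carrier G) ^ k"
  unfolding tuples_def by (simp add: card_PiE)

lemma card_tuples_one_at: "i < k \<Longrightarrow> card (tuples_one_at k i) = card (carrier G) ^ (k - 1)"
  using card_PiE_fixed_coords[of "{i}" k "(\<lambda>_. carrier G)(i:={\<one>})" "carrier G"] by simp

end

section \<open>Fibres of word maps\<close>

definition slice_hom :: "('a, 'b) monoid_scheme \<Rightarrow> nat \<Rightarrow> (nat \<times> bool) list \<Rightarrow> (nat \<Rightarrow> 'a) \<Rightarrow> 'a \<Rightarrow> 'a" where
  "slice_hom G i w t x = x [^]\<^bsub>G\<^esub> exp_sum i w \<otimes>\<^bsub>G\<^esub> commutator G x (cofactor G i w t)"

context odd_extraspecial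
begin

lemma finite_tuples: "finite (tuples G k)"
  unfolding tuples_def using finite_carrier by (simp add: finite_PiE)

lemma card_tuples_filter_slice:
  assumes i: "i < k"
  shows "card {t\<in>tuples G k. Q t} = (\<Sum>t\<in>tuples_one_at k i. card {x\<in>carrier G. Q (t(i:=x))})"
proof -
  have "card {t\<in>tuples G k. Q t} = (\<Sum>t\<in>tuples G k. if Q t then 1 else 0)"
    using finite_tuples[of k] by (simp add: sum.inter_filter[symmetric])
  also have "\<dots> = (\<Sum>t\<in>tuples_one_at k i. \<Sum>x\<in>carrier G. if Q (t(i:=x)) then 1 else 0)"
    unfolding tuples_def by (rule sum_PiE_update) (use i in auto)
  also have "\<dots> = (\<Sum>t\<in>tuples_one_at k i. card {x\<in>carrier G. Q (t(i:=x))})"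
    using finite_carrier by (simp add: sum.inter_filter[symmetric])
  finally show ?thesis .
qed

lemma card_word_fibre_if_exp_sum_coprime:
  assumes w: "is_word k w" and i: "i < k" and nd: "\<not> int p dvd exp_sum i w" and g: "g \<in> carrier G"
  shows "card {t\<in>tuples G k. word_eval G w t = g} = card (carrier G) ^ (k - 1)"
proof -
  have slice: "card {x\<in>carrier G. word_eval G w (t(i:=x)) = g} = 1" if t: "t \<in> tuples_one_at k i" for t
  proof -
    have tt: "t \<in> tuples G k" using subsetD[OF tuples_one_at_subset t] .
    define A where "A = word_eval G w (t(i:=\<one>))"
    define B where "B = cofactor G i w t"
    have A: "A \<in> carrier G" unfolding A_def using word_eval_closed[OF w tuples_update[OF tt i]] by simp
    have B: "B \<in> carrier G" unfolding B_def by (rule cofactor_closed[OF w tt])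
    have "{x\<in>carrier G. word_eval G w (t(i:=x)) = g} =
      {x\<in>carrier G. x [^] exp_sum i w \<otimes> A \<otimes> commutator G x B = g}"
    proof (rule Collect_cong, rule conj_cong[OF refl])
      fix x assume "x \<in> carrier G"
      then show "(word_eval G w (t(i:=x)) = g) = (x [^] exp_sum i w \<otimes> A \<otimes> commutator G x B = g)"
        unfolding A_def B_def by (simp only: word_eval_update_var[OF w tt i])
    qed
    also have "card \<dots> = 1"
      using A B by (intro card_fibre_inj_on_endo[OF finite_carrier inj_on_twisted_pow[OF nd A B] _ g])
        (simp add: image_subset_iff)
    finally show ?thesis .
  qed
  have "card {t\<in>tuples G k. word_eval G w t = g} = (\<Sum>t\<in>tuples_one_at k i. 1)"
    unfolding card_tuples_filter_slice[OF i] by (rule sum.cong) (simp_all only: slice)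
  then show ?thesis by (simp add: card_tuples_one_at[OF i])
qed

lemma word_eval_central_if_p_dvd_exp_sums:
  assumes w: "is_word k w" and dvd: "\<forall>i<k. int p dvd exp_sum i w" and t: "t \<in> tuples G k"
  shows "word_eval G w t \<in> Z"
  using t
proof (rule tuples_induct)
  show "word_eval G w (one_tuple k) \<in> Z"
    using word_eval_all_one[of k "one_tuple k" w] w center_one_closed by simp
next
  fix t i x assume t: "t \<in> tuples G k" and i: "i < k" and x: "x \<in> carrier G"
    and IH: "word_eval G w (t(i:=\<one>)) \<in> Z"
  have "x [^] exp_sum i w \<in> Z" using int_pow_central_if_p_dvd[OF x] dvd i by simp
  moreover have "commutator G x (cofactor G i w t) \<in> Z" using commutator_central[OF x cofactor_closed[OF w t]] .
  ultimately show "word_eval G w (t(i:=x)) \<in> Z"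
    using IH word_eval_update_var[OF w t i x] by (simp add: center_mult_closed)
qed

lemma slice_hom_central:
  assumes w: "is_word k w" and t: "t \<in> tuples G k" and d: "int p dvd exp_sum i w" and x: "x \<in> carrier G"
  shows "slice_hom G i w t x \<in> Z"
  unfolding slice_hom_def
  using center_mult_closed[OF int_pow_central_if_p_dvd[OF x d] commutator_central[OF x cofactor_closed[OF w t]]] .

lemma slice_hom_mult:
  assumes w: "is_word k w" and t: "t \<in> tuples G k" and d: "int p dvd exp_sum i w"
    and x: "x \<in> carrier G" and y: "y \<in> carrier G"
  shows "slice_hom G i w t (x \<otimes> y) = slice_hom G i w t x \<otimes> slice_hom G i w t y"
proof -
  define E where "E = exp_sum i w"
  define B where "B = cofactor G i w t"
  have B: "B \<in> carrier G" unfolding B_def by (rule cofactor_closed[OF w t])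
  have yE: "y [^] E \<in> Z" unfolding E_def using int_pow_central_if_p_dvd[OF y d] .
  have "slice_hom G i w t (x \<otimes> y) = x [^] E \<otimes> y [^] E \<otimes> (commutator G x B \<otimes> commutator G y B)"
    unfolding slice_hom_def E_def[symmetric] B_def[symmetric]
      int_pow_mult_if_p_dvd[OF x y d[folded E_def]] commutator_mult_left[OF x y B] ..
  also have "\<dots> = x [^] E \<otimes> (y [^] E \<otimes> commutator G x B) \<otimes> commutator G y B"
    using x y B by (simp add: m_assoc)
  also have "\<dots> = x [^] E \<otimes> commutator G x B \<otimes> (y [^] E \<otimes> commutator G y B)"
    using grp_center_commute[OF yE, of "commutator G x B"] x y B by (simp add: m_assoc)
  finally show ?thesis unfolding slice_hom_def E_def B_def .
qed

lemma word_eval_update_slice_hom: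
  assumes w: "is_word k w" and t: "t \<in> tuples G k" and i: "i < k" and d: "int p dvd exp_sum i w"
    and x: "x \<in> carrier G"
  shows "word_eval G w (t(i:=x)) = word_eval G w (t(i:=\<one>)) \<otimes> slice_hom G i w t x"
proof -
  have xE: "x [^] exp_sum i w \<in> Z" using int_pow_central_if_p_dvd[OF x d] .
  have A: "word_eval G w (t(i:=\<one>)) \<in> carrier G" using word_eval_closed[OF w tuples_update[OF t i]] by simp
  show ?thesis
    unfolding word_eval_update_var[OF w t i x] slice_hom_def
    using grp_center_commute[OF xE A] A x cofactor_closed[OF w t] center_closed[OF xE] by (simp add: m_assoc)
qed

lemma card_slice_fibre_if_slice_hom_nontrivial:
  assumes w: "is_word k w" and dvd: "\<forall>i<k. int p dvd exp_sum i w" and t: "t \<in> tuples G k" and i: "i < k"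
    and g: "g \<in> Z" and x1: "x1 \<in> carrier G" "slice_hom G i w t x1 \<noteq> \<one>"
  shows "p * card {x\<in>carrier G. word_eval G w (t(i:=x)) = g} = card (carrier G)"
proof -
  have d: "int p dvd exp_sum i w" using dvd i by simp
  define A where "A = word_eval G w (t(i:=\<one>))"
  have AZ: "A \<in> Z" unfolding A_def by (rule word_eval_central_if_p_dvd_exp_sums[OF w dvd tuples_update[OF t i]]) simp
  have Ac: "A \<in> carrier G" and gc: "g \<in> carrier G" using center_closed AZ g by auto
  have "{x\<in>carrier G. word_eval G w (t(i:=x)) = g} = {x\<in>carrier G. slice_hom G i w t x = inv A \<otimes> g}"
  proof (rule Collect_cong, rule conj_cong[OF refl])
    fix x assume x: "x \<in> carrier G"
    have "slice_hom G i w t x \<in> carrier G" using center_closed[OF slice_hom_central[OF w t d x]] .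
    then show "(word_eval G w (t(i:=x)) = g) = (slice_hom G i w t x = inv A \<otimes> g)"
      unfolding word_eval_update_slice_hom[OF w t i d x, folded A_def] using Ac gc by (metis inv_solve_left)
  qed
  also have "p * card \<dots> = card (carrier G)"
    using slice_hom_central[OF w t d] slice_hom_mult[OF w t d] x1
      center_mult_closed[OF center_inv_closed[OF AZ] g]
    by (rule card_fibre_mult_map_to_center)
  finally show ?thesis .
qed

lemma cofactor_mod_center_const:
  assumes w: "is_word k w" and i: "i < k" and dvd: "\<forall>j<k. j \<noteq> i \<longrightarrow> int p dvd cofactor_exp i j w"
    and t: "t \<in> tuples G k"
  shows "\<exists>z\<in>Z. cofactor G i w t = cofactor G i w (one_tuple k) \<otimes> z"
  using t
proof (rule tuples_induct)
  have B0: "cofactor G i w (one_tuple k) \<in> carrier G" by (rule cofactor_closed[OF w one_tuple_in_tuples])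
  then show "\<exists>z\<in>Z. cofactor G i w (one_tuple k) = cofactor G i w (one_tuple k) \<otimes> z"
    using center_one_closed by (intro bexI[of _ \<one>]) simp_all
  fix t j x assume t: "t \<in> tuples G k" and j: "j < k" and x: "x \<in> carrier G"
    and IH: "\<exists>z\<in>Z. cofactor G i w (t(j:=\<one>)) = cofactor G i w (one_tuple k) \<otimes> z"
  obtain z0 where z0: "z0 \<in> Z" "cofactor G i w (t(j:=\<one>)) = cofactor G i w (one_tuple k) \<otimes> z0"
    using IH by blast
  show "\<exists>z\<in>Z. cofactor G i w (t(j:=x)) = cofactor G i w (one_tuple k) \<otimes> z"
  proof (cases "j = i")
    case True
    then show ?thesis using z0 by (simp only: cofactor_update_self) blast
  next
    case False
    obtain z1 where z1: "z1 \<in> Z"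
      "cofactor G i w (t(j:=x)) = x [^] cofactor_exp i j w \<otimes> cofactor G i w (t(j:=\<one>)) \<otimes> z1"
      using cofactor_update_other[OF w t j x False] by blast
    have xZ: "x [^] cofactor_exp i j w \<in> Z" using int_pow_central_if_p_dvd[OF x] dvd j False by simp
    have "cofactor G i w (t(j:=x)) = cofactor G i w (one_tuple k) \<otimes> (x [^] cofactor_exp i j w \<otimes> z0 \<otimes> z1)"
      unfolding z1(2) z0(2)
      using grp_center_commute[OF xZ B0] B0 center_closed[OF xZ] center_closed[OF z0(1)] center_closed[OF z1(1)]
      by (simp add: m_assoc[symmetric])
    then show ?thesis using center_mult_closed[OF center_mult_closed[OF xZ z0(1)] z1(1)] by blast
  qed
qed

lemma slice_hom_const:
  assumes w: "is_word k w" and i: "i < k" and dvd: "\<forall>j<k. j \<noteq> i \<longrightarrow> int p dvd cofactor_exp i j w"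
    and t: "t \<in> tuples G k" and x: "x \<in> carrier G"
  shows "slice_hom G i w t x = slice_hom G i w (one_tuple k) x"
proof -
  obtain z where z: "z \<in> Z" "cofactor G i w t = cofactor G i w (one_tuple k) \<otimes> z"
    using cofactor_mod_center_const[OF w i dvd t] by blast
  have B0: "cofactor G i w (one_tuple k) \<in> carrier G" by (rule cofactor_closed[OF w one_tuple_in_tuples])
  have "commutator G x (cofactor G i w t) = commutator G x (cofactor G i w (one_tuple k))"
    unfolding z(2) commutator_mult_right[OF x B0 center_closed[OF z(1)]] commutator_center_right[OF z(1) x]
    using x B0 by simp
  then show ?thesis unfolding slice_hom_def by simp
qed

lemma word_eval_eq_one_if_slice_homs_trivial:
  assumes w: "is_word k w" and dvd: "\<forall>i<k. int p dvd exp_sum i w"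
    and dvd': "\<forall>i<k. \<forall>j<k. j \<noteq> i \<longrightarrow> int p dvd cofactor_exp i j w"
    and triv: "\<forall>i<k. \<forall>x\<in>carrier G. slice_hom G i w (one_tuple k) x = \<one>" and t: "t \<in> tuples G k"
  shows "word_eval G w t = \<one>"
  using t
proof (rule tuples_induct)
  show "word_eval G w (one_tuple k) = \<one>" using word_eval_all_one[of k "one_tuple k" w] w by simp
  fix t i x assume t: "t \<in> tuples G k" and i: "i < k" and x: "x \<in> carrier G"
    and IH: "word_eval G w (t(i:=\<one>)) = \<one>"
  have "slice_hom G i w t x = \<one>" using slice_hom_const[OF w i _ t x] dvd' triv i x by simp
  then show "word_eval G w (t(i:=x)) = \<one>"
    using word_eval_update_slice_hom[OF w t i _ x] dvd i IH by simp
qed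

lemma card_word_fibre_ge_if_slices_nonempty:
  assumes i: "i < k" and ne: "\<And>t. t \<in> tuples_one_at k i \<Longrightarrow> card {x\<in>carrier G. Q (t(i:=x))} \<noteq> 0"
  shows "card (carrier G) ^ (k - 1) \<le> card {t\<in>tuples G k. Q t}"
proof -
  have "card (carrier G) ^ (k - 1) = (\<Sum>t\<in>tuples_one_at k i. 1)" by (simp add: card_tuples_one_at[OF i])
  also have "\<dots> \<le> (\<Sum>t\<in>tuples_one_at k i. card {x\<in>carrier G. Q (t(i:=x))})"
    using ne by (intro sum_mono) (simp add: Suc_le_eq)
  finally show ?thesis unfolding card_tuples_filter_slice[OF i] .
qed

lemma card_word_fibre_ge_if_p_dvd_cofactor_exps:
  assumes w: "is_word k w" and k: "k \<ge> 1" and dvd: "\<forall>i<k. int p dvd exp_sum i w"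
    and dvd': "\<forall>i<k. \<forall>j<k. j \<noteq> i \<longrightarrow> int p dvd cofactor_exp i j w" and t0: "t0 \<in> tuples G k"
  shows "card (carrier G) ^ (k - 1) \<le> card {t\<in>tuples G k. word_eval G w t = word_eval G w t0}"
proof (cases "\<exists>i<k. \<exists>x\<in>carrier G. slice_hom G i w (one_tuple k) x \<noteq> \<one>")
  case True
  then obtain i x1 where i: "i < k" and x1: "x1 \<in> carrier G" "slice_hom G i w (one_tuple k) x1 \<noteq> \<one>" by blast
  have g: "word_eval G w t0 \<in> Z" by (rule word_eval_central_if_p_dvd_exp_sums[OF w dvd t0])
  show ?thesis
  proof (rule card_word_fibre_ge_if_slices_nonempty[OF i])
    fix t assume "t \<in> tuples_one_at k i"
    then have t: "t \<in> tuples G k" using tuples_one_at_subset by blast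
    have "slice_hom G i w t x1 \<noteq> \<one>" using slice_hom_const[OF w i _ t x1(1)] dvd' i x1(2) by simp
    then have "p * card {x\<in>carrier G. word_eval G w (t(i:=x)) = word_eval G w t0} = card (carrier G)"
      using card_slice_fibre_if_slice_hom_nontrivial[OF w dvd t i g x1(1)] by blast
    then show "card {x\<in>carrier G. word_eval G w (t(i:=x)) = word_eval G w t0} \<noteq> 0"
      using card_carrier_pos by (intro notI) simp
  qed
next
  case False
  then have "{t\<in>tuples G k. word_eval G w t = word_eval G w t0} = tuples G k"
    using word_eval_eq_one_if_slice_homs_trivial[OF w dvd dvd'] t0 by auto
  then show ?thesis using card_tuples card_carrier_pos by (simp add: power_increasing)
qed


lemma center_if_commutator_pows_eq:
  assumes y: "y \<in> carrier G" and y1: "y1 \<in> carrier G" and nd: "\<not> int p dvd c"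
    and eq: "\<And>x. x \<in> carrier G \<Longrightarrow> commutator G x y [^] c = commutator G x y1 [^] c"
  shows "inv y1 \<otimes> y \<in> Z"
proof (rule center_if_commutator_trivial)
  show "inv y1 \<otimes> y \<in> carrier G" using y y1 by simp
  fix x assume x: "x \<in> carrier G"
  have "commutator G x (inv y1 \<otimes> y) = inv (commutator G x y1) \<otimes> commutator G x y"
    using x y y1 by (simp add: commutator_mult_right commutator_inv_right)
  moreover have "(inv (commutator G x y1) \<otimes> commutator G x y) [^] c =
      inv (commutator G x y1 [^] c) \<otimes> commutator G x y [^] c"
    using int_pow_mult_distrib[OF grp_center_commute[OF center_inv_closed[OF commutator_central[OF x y1]]]]
      x y y1 by (simp add: int_pow_inv)
  ultimately have "commutator G x (inv y1 \<otimes> y) [^] c = \<one>" using eq[OF x] x y1 by simp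
  then show "commutator G x (inv y1 \<otimes> y) = \<one>"
    using center_eq_one_if_int_pow_eq_one[OF commutator_central[OF x] nd] y y1 by simp
qed

lemma card_trivial_slice_homs_le:
  assumes w: "is_word k w" and t: "t \<in> tuples G k" and j: "j < k" and ji: "j \<noteq> i"
    and nd: "\<not> int p dvd cofactor_exp i j w"
  shows "card {y\<in>carrier G. \<forall>x\<in>carrier G. slice_hom G i w (t(j:=y)) x = \<one>} \<le> p"
proof (cases "{y\<in>carrier G. \<forall>x\<in>carrier G. slice_hom G i w (t(j:=y)) x = \<one>} = {}")
  case True
  then show ?thesis by (subst True) simp
next
  case False
  define Triv where "Triv = {y\<in>carrier G. \<forall>x\<in>carrier G. slice_hom G i w (t(j:=y)) x = \<one>}"
  define c where "c = cofactor_exp i j w"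
  define B where "B = cofactor G i w (t(j:=\<one>))"
  have B: "B \<in> carrier G" unfolding B_def using cofactor_closed[OF w tuples_update[OF t j]] by simp
  obtain y1 where y1: "y1 \<in> Triv" using False unfolding Triv_def by blast
  have y1c: "y1 \<in> carrier G" using y1 unfolding Triv_def by simp
  have slice: "slice_hom G i w (t(j:=y)) x = x [^] exp_sum i w \<otimes> (commutator G x y [^] c \<otimes> commutator G x B)"
    if "x \<in> carrier G" "y \<in> carrier G" for x y
    unfolding slice_hom_def commutator_cofactor_update_other[OF w t j ji that] c_def B_def ..
  have "Triv \<subseteq> (\<lambda>z. y1 \<otimes> z) ` Z"
  proof
    fix y assume y: "y \<in> Triv"
    have yc: "y \<in> carrier G" using y unfolding Triv_def by simp
    have "commutator G x y [^] c = commutator G x y1 [^] c" if x: "x \<in> carrier G" for x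
    proof -
      have "slice_hom G i w (t(j:=y)) x = slice_hom G i w (t(j:=y1)) x" using y y1 x unfolding Triv_def by simp
      then show ?thesis unfolding slice[OF x yc] slice[OF x y1c] using x yc y1c B by simp
    qed
    then have "inv y1 \<otimes> y \<in> Z" using center_if_commutator_pows_eq[OF yc y1c nd[folded c_def]] by blast
    then show "y \<in> (\<lambda>z. y1 \<otimes> z) ` Z" using yc y1c by (intro image_eqI[of _ _ "inv y1 \<otimes> y"]) simp_all
  qed
  then have "card Triv \<le> card ((\<lambda>z. y1 \<otimes> z) ` Z)" by (rule card_mono[OF finite_imageI[OF finite_center]])
  also have "\<dots> \<le> p" using card_image_le[OF finite_center] card_center by metis
  finally show ?thesis unfolding Triv_def .
qed

lemma card_carrier_le_sum_slice_fibres: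
  assumes w: "is_word k w" and dvd: "\<forall>i<k. int p dvd exp_sum i w" and t: "t \<in> tuples G k"
    and i: "i < k" and j: "j < k" and ji: "j \<noteq> i" and nd: "\<not> int p dvd cofactor_exp i j w" and g: "g \<in> Z"
  shows "card (carrier G) \<le> (\<Sum>y\<in>carrier G. card {x\<in>carrier G. word_eval G w (t(j:=y, i:=x)) = g})"
proof -
  define N where "N = card (carrier G)"
  define cnt where "cnt y = card {x\<in>carrier G. word_eval G w (t(j:=y, i:=x)) = g}" for y
  define Triv where "Triv = {y\<in>carrier G. \<forall>x\<in>carrier G. slice_hom G i w (t(j:=y)) x = \<one>}"
  have Triv: "card Triv \<le> p" unfolding Triv_def by (rule card_trivial_slice_homs_le[OF w t j ji nd])
  have card_nontriv: "card (carrier G - Triv) = N - card Triv"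
    unfolding N_def Triv_def by (rule card_Diff_subset) (use finite_carrier in auto)
  have nontriv: "p * cnt y = N" if y: "y \<in> carrier G - Triv" for y
  proof -
    obtain x1 where x1: "x1 \<in> carrier G" "slice_hom G i w (t(j:=y)) x1 \<noteq> \<one>"
      using y unfolding Triv_def by blast
    show ?thesis unfolding cnt_def N_def
      using card_slice_fibre_if_slice_hom_nontrivial[OF w dvd tuples_update[OF t j] i g x1] y by simp
  qed
  have "p * N \<le> (N - card Triv) * N"
    using Triv two_p_le_card_carrier unfolding N_def by (intro mult_le_mono1) linarith
  also have "(N - card Triv) * N = p * (\<Sum>y\<in>carrier G - Triv. cnt y)"
    unfolding sum_distrib_left card_nontriv[symmetric] by (simp add: nontriv)
  also have "\<dots> \<le> p * (\<Sum>y\<in>carrier G. cnt y)"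
    using finite_carrier by (intro mult_le_mono2 sum_mono2) auto
  finally have "p * N \<le> p * (\<Sum>y\<in>carrier G. cnt y)" .
  then show ?thesis unfolding N_def cnt_def using prime_gt_0_nat[OF prime_p] by simp
qed

lemma card_word_fibre_ge_if_cofactor_exp_coprime:
  assumes w: "is_word k w" and dvd: "\<forall>i<k. int p dvd exp_sum i w"
    and i: "i < k" and j: "j < k" and ji: "j \<noteq> i" and nd: "\<not> int p dvd cofactor_exp i j w"
    and t0: "t0 \<in> tuples G k"
  shows "card (carrier G) ^ (k - 1) \<le> card {t\<in>tuples G k. word_eval G w t = word_eval G w t0}"
proof -
  define g where "g = word_eval G w t0"
  define N where "N = card (carrier G)"
  define cnt where "cnt t = card {x\<in>carrier G. word_eval G w (t(i:=x)) = g}" for t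
  define T where "T = PiE {..<k} ((\<lambda>_. carrier G)(i:={\<one>}, j:={\<one>}))"
  have g: "g \<in> Z" unfolding g_def by (rule word_eval_central_if_p_dvd_exp_sums[OF w dvd t0])
  have T: "T \<subseteq> tuples G k" unfolding T_def tuples_def by (rule PiE_mono) simp
  have card_T: "card T = N ^ (k - 2)"
    unfolding T_def N_def using i j ji
    by (subst card_PiE_fixed_coords[of "{i, j}" k _ "carrier G"]) (auto simp: numeral_2_eq_2)
  have "k - 1 = Suc (k - 2)" using i j ji by linarith
  then have "N ^ (k - 1) = card T * N" unfolding card_T by (simp only: power_Suc2)
  also have "\<dots> = (\<Sum>t\<in>T. N)" by simp
  also have "\<dots> \<le> (\<Sum>t\<in>T. \<Sum>y\<in>carrier G. cnt (t(j:=y)))"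
  proof (rule sum_mono)
    fix t assume "t \<in> T"
    then show "N \<le> (\<Sum>y\<in>carrier G. cnt (t(j:=y)))"
      using card_carrier_le_sum_slice_fibres[OF w dvd subsetD[OF T] i j ji nd g] unfolding cnt_def N_def by simp
  qed
  also have "\<dots> = (\<Sum>t\<in>tuples_one_at k i. cnt t)"
    unfolding T_def using sum_PiE_update[of j "{..<k}" \<one> "(\<lambda>_. carrier G)(i:={\<one>})" cnt] j ji by simp
  also have "\<dots> = card {t\<in>tuples G k. word_eval G w t = g}"
    unfolding cnt_def by (rule card_tuples_filter_slice[OF i, symmetric])
  finally show ?thesis unfolding N_def g_def .
qed

lemma card_word_fibre_ge:
  assumes w: "is_word k w" and k: "k \<ge> 1" and t0: "t0 \<in> tuples G k"
  shows "card (carrier G) ^ (k - 1) \<le> card {t\<in>tuples G k. word_eval G w t = word_eval G w t0}"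
proof (cases "\<forall>i<k. int p dvd exp_sum i w")
  case False
  then obtain i where i: "i < k" "\<not> int p dvd exp_sum i w" by blast
  then show ?thesis
    using card_word_fibre_if_exp_sum_coprime[OF w i word_eval_closed[OF w t0]] by simp
next
  case dvd: True
  show ?thesis
  proof (cases "\<forall>i<k. \<forall>j<k. j \<noteq> i \<longrightarrow> int p dvd cofactor_exp i j w")
    case True
    then show ?thesis by (rule card_word_fibre_ge_if_p_dvd_cofactor_exps[OF w k dvd _ t0])
  next
    case False
    then obtain i j where "i < k" "j < k" "j \<noteq> i" "\<not> int p dvd cofactor_exp i j w" by blast
    then show ?thesis using card_word_fibre_ge_if_cofactor_exp_coprime[OF w dvd _ _ _ _ t0] by blast
  qed
qed

lemma amit_ashurst: "amit_ashurst G"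
  unfolding amit_ashurst_def
proof (intro allI impI ballI)
  fix k w x assume k: "1 \<le> k" and w: "is_word k w" and x: "x \<in> word_image G k w"
  then obtain t0 where t0: "t0 \<in> tuples G k" and xe: "x = word_eval G w t0" unfolding word_image_def by blast
  define N where "N = real (card (carrier G))"
  have N: "N > 0" unfolding N_def using card_carrier_pos by simp
  have "N ^ (k - 1) \<le> real (card {t\<in>tuples G k. word_eval G w t = x})"
    using card_word_fibre_ge[OF w k t0] unfolding xe N_def by (metis of_nat_le_iff of_nat_power)
  moreover have "N ^ k = N ^ (k - 1) * N" using k by (metis One_nat_def Suc_diff_le diff_Suc_1 power_Suc2)
  ultimately have "1 / N \<le> real (card {t\<in>tuples G k. word_eval G w t = x}) / N ^ k"
    using N by (simp add: field_simps)
  then show "1 / real (card (carrier G)) \<le> word_prob G k w x" unfolding word_prob_def N_def .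
qed

end

theorem corollary3p3:
  fixes G :: "('a, 'b) monoid_scheme" and p :: nat
  assumes "Factorial_Ring.prime p" and "odd p" and "extraspecial_p_group p G"
  shows "amit_ashurst G"
proof -
  interpret odd_extraspecial G p by (rule odd_extraspecialI[OF assms])
  show ?thesis by (rule amit_ashurst)
qed

end
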